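(* For every $k\ge1$ (with no restriction $k\le n$), in $\mathbb{Q}[S_n]$, \[B_1^k=\sum_{j=1}^{\min(k,n)} S_{k,j}\,B_j,\] where $S_{k,j}$ is the Stirling number of the second kind.
   Context: Elements of $S_n$ are written in deck notation: a word $c_1\cdots c_n$ (a rearrangement of $1,\ldots,n$) is the deck with card $c_i$ in position $i$. Multiplication in $\mathbb{Q}[S_n]$: for $\sigma=c_1\cdots c_n$, $\tau=d_1\cdots d_n$, $\sigma\tau=c_{d_1}\cdots c_{d_n}$, extended bilinearly. For $a\in[n]$, $B_a$ is the sum of all words $c_1\cdots c_n\in S_n$ in which the letters $a+1,\ldots,n$ appear in increasing order from left to right. *)

theory Defs
  imports "HOL-Combinatorics.Combinatorics"
begin

text \<open>A permutation in S_n is a function p :: nat => nat with p permutes {1..n};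
  in deck notation c_1...c_n we have c_i = p i. The deck product
  sigma tau = c_(d_1) ... c_(d_n) is function composition sigma o tau.
  Elements of Q[S_n] are functions from permutations to rat (coefficients),
  zero outside S_n.\<close>

definition perms :: "nat \<Rightarrow> (nat \<Rightarrow> nat) set" where
  "perms n = {p. p permutes {1..n}}"

definition gmult :: "nat \<Rightarrow> ((nat \<Rightarrow> nat) \<Rightarrow> rat) \<Rightarrow> ((nat \<Rightarrow> nat) \<Rightarrow> rat) \<Rightarrow> ((nat \<Rightarrow> nat) \<Rightarrow> rat)" where
  "gmult n f g = (\<lambda>x. \<Sum>\<sigma>\<in>perms n. \<Sum>\<tau>\<in>perms n. if \<sigma> \<circ> \<tau> = x then f \<sigma> * g \<tau> else 0)"

definition gone :: "(nat \<Rightarrow> nat) \<Rightarrow> rat" where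
  "gone = (\<lambda>x. if x = id then 1 else 0)"

primrec gpow :: "nat \<Rightarrow> ((nat \<Rightarrow> nat) \<Rightarrow> rat) \<Rightarrow> nat \<Rightarrow> ((nat \<Rightarrow> nat) \<Rightarrow> rat)" where
  "gpow n f 0 = gone"
| "gpow n f (Suc k) = gmult n f (gpow n f k)"

definition B :: "nat \<Rightarrow> nat \<Rightarrow> (nat \<Rightarrow> nat) \<Rightarrow> rat" where
  "B n a = (\<lambda>\<sigma>. if \<sigma> \<in> perms n \<and>
      (\<forall>i j. 1 \<le> i \<and> i < j \<and> j \<le> n \<and> a < \<sigma> i \<and> a < \<sigma> j \<longrightarrow> \<sigma> i < \<sigma> j)
     then 1 else 0)"

end

theory Submission
  imports Defs
begin

text \<open>
  The terms of \<open>B n 1\<close> are the \<open>n\<close> words that move the top card to some position \<open>p\<close>,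
  and \<open>B n a \<sigma> = 1\<close> means that \<open>inv \<sigma>\<close> is increasing on \<open>{a+1..n}\<close>. Hence the
  coefficient of \<open>\<sigma>\<close> in \<open>B_1 B_j\<close> is the number of \<open>p\<close> for which \<open>\<xi> = inv \<sigma>\<close>,
  composed with that move, is increasing on \<open>{j+1..n}\<close>. For \<open>p \<le> j\<close> the composition agrees
  with \<open>\<xi>\<close> there; for \<open>p > j\<close> it is increasing exactly when \<open>\<xi>\<close> is increasing on
  \<open>{j+2..n}\<close> and \<open>p\<close> is the unique place at which \<open>\<xi> 1\<close> fits into that increasing
  sequence. So \<open>B_1 B_j = j B_j + B_(j+1)\<close> (the last term absent for \<open>j = n\<close>), and the
  recurrence \<open>S(k+1,j) = j S(k,j) + S(k,j-1)\<close> gives the theorem by induction on \<open>k\<close>.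
\<close>

lemma permutes_strict_mono_on_eq_id:
  fixes f :: "'a::wellorder \<Rightarrow> 'a"
  assumes f: "f permutes A" and mono: "strict_mono_on A f"
  shows "f = id"
proof
  fix x show "f x = id x"
  proof (induction x rule: less_induct)
    case (less x)
    show ?case
    proof (cases "x \<in> A")
      case False
      then show ?thesis using permutes_not_in[OF f] by simp
    next
      case True
      have "\<not> f x < x"
      proof
        assume "f x < x"
        then have "f (f x) = f x" using less by simp
        then show False using \<open>f x < x\<close> permutes_inj[OF f] by (metis inj_eq less_irrefl)
      qed
      moreover have "\<not> x < f x"
      proof
        assume "x < f x"
        obtain y where y: "y \<in> A" "f y = x"
          using \<open>x \<in> A\<close> permutes_image[OF f] by (metis imageE)
        have "y \<noteq> x" using y \<open>x < f x\<close> by auto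
        moreover have "\<not> y < x"
          using less[of y] y \<open>y \<noteq> x\<close> by auto
        moreover have "\<not> x < y"
          using strict_mono_onD[OF mono \<open>x \<in> A\<close> y(1)] y \<open>x < f x\<close> by auto
        ultimately show False by simp
      qed
      ultimately show ?thesis by simp
    qed
  qed
qed

lemma ex1_insertion_point:
  fixes g :: "nat \<Rightarrow> 'a::linorder"
  assumes mono: "strict_mono_on {a<..b} g" and "a \<le> b" and c: "c \<notin> g ` {a<..b}"
  shows "\<exists>!p. p \<in> {a..b} \<and> (\<forall>u\<in>{a<..p}. g u < c) \<and> (\<forall>u\<in>{p<..b}. c < g u)"
    (is "\<exists>!p. ?split p")
proof (rule ex_ex1I)
  define S where "S = {p \<in> {a..b}. \<forall>u\<in>{a<..p}. g u < c}"
  have "finite S"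
    by (simp add: S_def)
  moreover have "a \<in> S"
    using \<open>a \<le> b\<close> by (simp add: S_def)
  ultimately obtain m where "m \<in> S" and le_m: "\<And>q. q \<in> S \<Longrightarrow> q \<le> m"
    using Max_in Max_ge by blast
  then have m: "m \<in> {a..b}" "\<forall>u\<in>{a<..m}. g u < c"
    by (simp_all add: S_def)
  have "c < g u" if u: "u \<in> {m<..b}" for u
  proof (rule ccontr)
    have u_range: "u \<in> {a<..b}"
      using u m(1) by auto
    then have "g u \<noteq> c"
      using c by blast
    moreover assume "\<not> c < g u"
    ultimately have "g u < c"
      by simp
    have "u \<in> S"
      unfolding S_def
    proof (intro CollectI conjI ballI)
      show "u \<in> {a..b}"
        using u_range by simp
      fix v assume "v \<in> {a<..u}"
      then have "g v \<le> g u"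
        using u_range by (intro strict_mono_on_leD[OF mono]) auto
      then show "g v < c"
        using \<open>g u < c\<close> by simp
    qed
    then have "u \<le> m"
      by (rule le_m)
    with u show False
      by simp
  qed
  then show "\<exists>p. ?split p"
    using m by blast
next
  have not_less: "\<not> p < q" if "?split p" "?split q" for p q
  proof
    assume "p < q"
    moreover have "q \<in> {a..b}"
      using that(2) by blast
    ultimately have "q \<in> {p<..b}" "q \<in> {a<..q}"
      using that(1) by auto
    then have "c < g q" "g q < c"
      using that by blast+
    then show False
      by simp
  qed
  show "p = q" if "?split p" "?split q" for p q
    using not_less[OF that] not_less[OF that(2,1)] by simp
qed

lemma sum_if_less_Suc_shift:
  fixes F :: "nat \<Rightarrow> 'a::comm_monoid_add"
  assumes "F 1 = 0"
  shows "(\<Sum>j=1..n. if j < n then F (Suc j) else 0) = (\<Sum>j=1..n. F j)"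
proof -
  have "(\<Sum>j=1..n. if j < n then F (Suc j) else 0) = (\<Sum>j\<in>{j \<in> {1..n}. j < n}. F (Suc j))"
    by (rule sum.inter_filter[symmetric]) simp
  also have "\<dots> = (\<Sum>j\<in>{1..<n}. F (Suc j))"
    by (rule sum.cong) auto
  also have "\<dots> = (\<Sum>j\<in>{Suc 1..<Suc n}. F j)"
    by (simp only: sum.atLeast_Suc_lessThan_Suc_shift comp_def)
  also have "\<dots> = (\<Sum>j=1..n. F j)"
    using assms by (cases n) (simp_all add: atLeastLessThanSuc_atLeastAtMost sum.atLeast_Suc_atMost)
  finally show ?thesis .
qed

lemma finite_perms: "finite (perms n)"
  by (simp add: perms_def finite_permutations)

lemma gmult_eq_0_outside: "x \<notin> perms n \<Longrightarrow> gmult n f g x = 0"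
  unfolding gmult_def perms_def by (auto intro!: sum.neutral permutes_compose)

lemma gmult_eq_sum_inv:
  assumes x: "x \<in> perms n"
  shows "gmult n f g x = (\<Sum>r\<in>perms n. f (inv r) * g (r \<circ> x))"
proof -
  have "(\<Sum>\<tau>\<in>perms n. if \<sigma> \<circ> \<tau> = x then f \<sigma> * g \<tau> else 0) = f \<sigma> * g (inv \<sigma> \<circ> x)"
    if "\<sigma> \<in> perms n" for \<sigma>
  proof -
    have \<sigma>: "\<sigma> permutes {1..n}"
      using that by (simp add: perms_def)
    have "\<sigma> \<circ> \<tau> = x \<longleftrightarrow> \<tau> = inv \<sigma> \<circ> x" for \<tau>
    proof
      assume "\<sigma> \<circ> \<tau> = x"
      then have "inv \<sigma> \<circ> (\<sigma> \<circ> \<tau>) = inv \<sigma> \<circ> x" by simp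
      then show "\<tau> = inv \<sigma> \<circ> x" by (simp add: o_assoc permutes_inv_o(2)[OF \<sigma>])
    next
      assume "\<tau> = inv \<sigma> \<circ> x"
      then show "\<sigma> \<circ> \<tau> = x" by (simp add: o_assoc permutes_inv_o(1)[OF \<sigma>])
    qed
    moreover have "inv \<sigma> \<circ> x \<in> perms n"
      using x \<sigma> by (simp add: perms_def permutes_compose permutes_inv)
    ultimately show ?thesis
      by (simp add: finite_perms)
  qed
  then have "gmult n f g x = (\<Sum>\<sigma>\<in>perms n. f \<sigma> * g (inv \<sigma> \<circ> x))"
    unfolding gmult_def by simp
  also have "\<dots> = (\<Sum>r\<in>perms n. f (inv r) * g (r \<circ> x))"
    by (rule sum.reindex_bij_witness[where i = inv and j = inv])
      (auto simp: perms_def permutes_inv_inv permutes_inv)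
  finally show ?thesis .
qed

lemma gmult_gone_right: "gmult n f gone x = (if x \<in> perms n then f x else 0)"
proof -
  have "id \<in> perms n"
    by (simp add: perms_def permutes_id)
  moreover have "(if \<sigma> \<circ> \<tau> = x then f \<sigma> * gone \<tau> else 0) = (if \<tau> = id then (if \<sigma> = x then f \<sigma> else 0) else 0)"
    for \<sigma> \<tau>
    by (auto simp: gone_def)
  ultimately have "(\<Sum>\<tau>\<in>perms n. if \<sigma> \<circ> \<tau> = x then f \<sigma> * gone \<tau> else 0) = (if \<sigma> = x then f \<sigma> else 0)"
    for \<sigma>
    by (simp add: finite_perms)
  then show ?thesis
    unfolding gmult_def by (simp add: finite_perms)
qed

lemma gmult_sum_right:
  "gmult n f (\<lambda>\<sigma>. \<Sum>j\<in>J. c j * g j \<sigma>) = (\<lambda>x. \<Sum>j\<in>J. c j * gmult n f (g j) x)"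
proof -
  have "(if P then f s * (\<Sum>j\<in>J. c j * g j t) else 0) = (\<Sum>j\<in>J. c j * (if P then f s * g j t else 0))"
    for P s t
    by (cases P) (simp_all add: sum_distrib_left mult_ac)
  then show ?thesis
    unfolding gmult_def by (simp add: sum_distrib_left sum.swap[of _ J])
qed

lemma B_altdef:
  "B n a \<sigma> = of_bool (\<sigma> \<in> perms n \<and> strict_mono_on {a<..n} (inv \<sigma>))"
proof -
  have "(\<forall>i j. 1 \<le> i \<and> i < j \<and> j \<le> n \<and> a < \<sigma> i \<and> a < \<sigma> j \<longrightarrow> \<sigma> i < \<sigma> j)
      \<longleftrightarrow> strict_mono_on {a<..n} (inv \<sigma>)" if \<sigma>: "\<sigma> permutes {1..n}"
  proof
    assume mono: "\<forall>i j. 1 \<le> i \<and> i < j \<and> j \<le> n \<and> a < \<sigma> i \<and> a < \<sigma> j \<longrightarrow> \<sigma> i < \<sigma> j"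
    show "strict_mono_on {a<..n} (inv \<sigma>)"
    proof (rule strict_mono_onI)
      fix u v assume uv: "u \<in> {a<..n}" "v \<in> {a<..n}" "u < v"
      define i j where "i = inv \<sigma> u" and "j = inv \<sigma> v"
      have ij: "i \<in> {1..n}" "j \<in> {1..n}" "\<sigma> i = u" "\<sigma> j = v"
        using uv permutes_in_image[OF permutes_inv[OF \<sigma>]] permutes_inverses(1)[OF \<sigma>]
        unfolding i_def j_def by auto
      have "\<not> j < i"
        using mono[rule_format, of j i] ij uv by auto
      moreover have "i \<noteq> j"
        using ij uv by auto
      ultimately show "inv \<sigma> u < inv \<sigma> v"
        unfolding i_def j_def by simp
    qed
  next
    assume "strict_mono_on {a<..n} (inv \<sigma>)"
    show "\<forall>i j. 1 \<le> i \<and> i < j \<and> j \<le> n \<and> a < \<sigma> i \<and> a < \<sigma> j \<longrightarrow> \<sigma> i < \<sigma> j"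
    proof (intro allI impI)
      fix i j assume ij: "1 \<le> i \<and> i < j \<and> j \<le> n \<and> a < \<sigma> i \<and> a < \<sigma> j"
      then have "i \<in> {1..n}" "j \<in> {1..n}"
        by auto
      then have "\<sigma> i \<in> {1..n}" "\<sigma> j \<in> {1..n}"
        by (simp_all only: permutes_in_image[OF \<sigma>])
      with ij have "\<sigma> i \<in> {a<..n}" "\<sigma> j \<in> {a<..n}"
        by auto
      then have "inv \<sigma> (\<sigma> i) < inv \<sigma> (\<sigma> j) \<longleftrightarrow> \<sigma> i < \<sigma> j"
        by (rule strict_mono_on_less[OF \<open>strict_mono_on {a<..n} (inv \<sigma>)\<close>])
      with ij show "\<sigma> i < \<sigma> j"
        by (simp add: permutes_inverses(2)[OF \<sigma>])
    qed
  qed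
  then show ?thesis
    unfolding B_def perms_def of_bool_def by (simp only: mem_Collect_eq) meson
qed

lemma B_eq_0_outside: "\<sigma> \<notin> perms n \<Longrightarrow> B n a \<sigma> = 0"
  by (simp add: B_def)

text \<open>As words, \<open>move_top_to p = 2 3 \<dots> p 1 (p+1) \<dots> n\<close> (the terms of \<open>B n 1\<close>) and its
  inverse \<open>move_to_top p = p 1 2 \<dots> (p-1) (p+1) \<dots> n\<close>.\<close>

definition move_to_top :: "nat \<Rightarrow> nat \<Rightarrow> nat" where
  "move_to_top p m = (if m = 1 then p else if 2 \<le> m \<and> m \<le> p then m - 1 else m)"

definition move_top_to :: "nat \<Rightarrow> nat \<Rightarrow> nat" where
  "move_top_to p m = (if m = p then 1 else if 1 \<le> m \<and> m < p then m + 1 else m)"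

lemma move_top_to_move_to_top [simp]: "1 \<le> p \<Longrightarrow> move_top_to p (move_to_top p m) = m"
  by (auto simp: move_to_top_def move_top_to_def)

lemma move_to_top_move_top_to [simp]: "1 \<le> p \<Longrightarrow> move_to_top p (move_top_to p m) = m"
  by (auto simp: move_to_top_def move_top_to_def)

lemma inj_move_to_top: "inj move_to_top"
proof (rule injI)
  fix p q assume "move_to_top p = move_to_top q"
  then have "move_to_top p 1 = move_to_top q 1"
    by simp
  then show "p = q"
    by (simp add: move_to_top_def)
qed

lemma move_to_top_permutes:
  assumes "p \<in> {1..n}"
  shows "move_to_top p permutes {1..n}"
proof (rule bij_imp_permutes)
  show "bij_betw (move_to_top p) {1..n} {1..n}"
    by (rule bij_betw_byWitness[where f' = "move_top_to p"])
      (use assms in \<open>auto simp: move_to_top_def move_top_to_def\<close>)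
  show "move_to_top p m = m" if "m \<notin> {1..n}" for m
    using that assms by (auto simp: move_to_top_def)
qed

lemma inv_move_to_top:
  assumes "p \<in> {1..n}"
  shows "inv (move_to_top p) = move_top_to p"
  using permutes_inv_eq[OF move_to_top_permutes[OF assms]] assms by fastforce

lemma move_top_to_permutes:
  assumes "p \<in> {1..n}"
  shows "move_top_to p permutes {1..n}"
  using permutes_inv[OF move_to_top_permutes[OF assms]] by (simp add: inv_move_to_top[OF assms])

lemma strict_mono_on_move_to_top: "strict_mono_on {1<..n} (move_to_top p)"
  by (rule strict_mono_onI) (auto simp: move_to_top_def)

lemma move_top_to_less_move_top_to:
  "1 \<le> u \<Longrightarrow> u < v \<Longrightarrow> u \<noteq> p \<Longrightarrow> v \<noteq> p \<Longrightarrow> move_top_to p u < move_top_to p v"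
  by (auto simp: move_top_to_def)

lemma permutes_strict_mono_on_tail:
  assumes n: "1 \<le> n" and r: "r permutes {1..n}" and mono: "strict_mono_on {1<..n} r"
  shows "r = move_to_top (r 1)"
proof -
  define p where "p = r 1"
  have p: "p \<in> {1..n}"
    using n permutes_in_image[OF r, of 1] by (simp add: p_def)
  define r' where "r' = move_top_to p \<circ> r"
  have "r' permutes {1..n}"
    unfolding r'_def using r move_top_to_permutes[OF p] by (rule permutes_compose)
  then have "r' permutes {1<..n}"
  proof (rule permutes_superset)
    fix x assume "x \<in> {1..n} - {1<..n}"
    then have "x = 1" by auto
    then show "r' x = x" by (simp add: r'_def p_def move_top_to_def)
  qed
  moreover have "strict_mono_on {1<..n} r'"
  proof (rule strict_mono_onI)
    fix u v assume uv: "u \<in> {1<..n}" "v \<in> {1<..n}" "u < v"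
    have "r u \<in> {1..n}" "r u \<noteq> p" "r v \<noteq> p"
      using uv permutes_in_image[OF r, of u] permutes_inj[OF r]
      by (auto simp: p_def inj_eq)
    then show "r' u < r' v"
      unfolding r'_def using strict_mono_onD[OF mono uv]
      by (auto intro: move_top_to_less_move_top_to)
  qed
  ultimately have "r' = id"
    by (rule permutes_strict_mono_on_eq_id)
  then have "move_to_top p \<circ> r' = move_to_top p"
    by simp
  moreover have "move_to_top p \<circ> r' = r"
    using p by (auto simp: r'_def)
  ultimately show ?thesis
    by (simp add: p_def)
qed

lemma perms_strict_mono_on_tail:
  assumes "1 \<le> n"
  shows "{r \<in> perms n. strict_mono_on {1<..n} r} = move_to_top ` {1..n}"
proof
  show "{r \<in> perms n. strict_mono_on {1<..n} r} \<subseteq> move_to_top ` {1..n}"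
  proof
    fix r assume "r \<in> {r \<in> perms n. strict_mono_on {1<..n} r}"
    then have r: "r permutes {1..n}" "strict_mono_on {1<..n} r"
      by (auto simp: perms_def)
    then have "r = move_to_top (r 1)"
      using assms by (intro permutes_strict_mono_on_tail)
    moreover have "r 1 \<in> {1..n}"
      using assms permutes_in_image[OF r(1), of 1] by simp
    ultimately show "r \<in> move_to_top ` {1..n}"
      by blast
  qed
  show "move_to_top ` {1..n} \<subseteq> {r \<in> perms n. strict_mono_on {1<..n} r}"
    using move_to_top_permutes strict_mono_on_move_to_top by (auto simp: perms_def)
qed

lemma gmult_B1_left:
  assumes n: "1 \<le> n" and x: "x \<in> perms n"
  shows "gmult n (B n 1) g x = (\<Sum>p=1..n. g (move_to_top p \<circ> x))"
proof -
  have "B n 1 (inv r) = of_bool (strict_mono_on {1<..n} r)" if "r \<in> perms n" for r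
    using that by (simp add: B_altdef perms_def permutes_inv permutes_inv_inv)
  then have "gmult n (B n 1) g x = (\<Sum>r\<in>perms n. of_bool (strict_mono_on {1<..n} r) * g (r \<circ> x))"
    unfolding gmult_eq_sum_inv[OF x] by (intro sum.cong) simp_all
  also have "\<dots> = (\<Sum>r\<in>{r \<in> perms n. strict_mono_on {1<..n} r}. g (r \<circ> x))"
    by (simp add: sum.inter_filter finite_perms of_bool_def if_distrib[of "\<lambda>y. y * _"] cong: if_cong)
  also have "\<dots> = (\<Sum>r\<in>move_to_top ` {1..n}. g (r \<circ> x))"
    by (simp only: perms_strict_mono_on_tail[OF n])
  also have "\<dots> = (\<Sum>p=1..n. g (move_to_top p \<circ> x))"
    by (simp add: sum.reindex inj_on_subset[OF inj_move_to_top])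
  finally show ?thesis .
qed

lemma strict_mono_on_comp_move_top_to_le:
  assumes "p \<le> j"
  shows "strict_mono_on {j<..n} (g \<circ> move_top_to p) \<longleftrightarrow> strict_mono_on {j<..n} g"
proof -
  have "(g \<circ> move_top_to p) u = g u" if "u \<in> {j<..n}" for u
    using that assms by (simp add: move_top_to_def)
  then show ?thesis
    unfolding strict_mono_on_def by (metis greaterThanAtMost_iff)
qed

lemma strict_mono_on_comp_move_top_toD:
  fixes g :: "nat \<Rightarrow> 'a::order"
  assumes "j < p" "p \<le> n" and "strict_mono_on {j<..n} (g \<circ> move_top_to p)"
  shows "strict_mono_on {Suc j<..n} g \<and> (\<forall>u\<in>{Suc j<..p}. g u < g 1) \<and> (\<forall>u\<in>{p<..n}. g 1 < g u)"
proof -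
  define h where "h = g \<circ> move_top_to p"
  have p: "1 \<le> p"
    using assms by simp
  have g_eq: "g u = h (move_to_top p u)" for u
    using p by (simp add: h_def)
  have h: "strict_mono_on {j<..n} h"
    using assms(3) by (simp add: h_def)
  have "strict_mono_on {Suc j<..n} g"
  proof (rule strict_mono_onI)
    fix u v assume uv: "u \<in> {Suc j<..n}" "v \<in> {Suc j<..n}" "u < v"
    have "move_to_top p u < move_to_top p v"
      using uv strict_mono_onD[OF strict_mono_on_move_to_top, of u n v p] by simp
    moreover have "move_to_top p u \<in> {j<..n}" "move_to_top p v \<in> {j<..n}"
      using uv by (auto simp: move_to_top_def)
    ultimately show "g u < g v"
      unfolding g_eq using strict_mono_onD[OF h] by blast
  qed
  moreover have "g u < g 1" if "u \<in> {Suc j<..p}" for u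
  proof -
    have "move_to_top p u = u - 1"
      using that by (simp add: move_to_top_def)
    moreover have "u - 1 \<in> {j<..n}" "u - 1 < p"
      using that assms by auto
    ultimately show ?thesis
      unfolding g_eq using strict_mono_onD[OF h, of "u - 1" p] assms by (simp add: move_to_top_def)
  qed
  moreover have "g 1 < g u" if "u \<in> {p<..n}" for u
  proof -
    have "move_to_top p u = u"
      using that p by (simp add: move_to_top_def)
    then show ?thesis
      unfolding g_eq using strict_mono_onD[OF h, of p u] that assms by (simp add: move_to_top_def)
  qed
  ultimately show ?thesis
    by blast
qed

lemma strict_mono_on_comp_move_top_toI:
  fixes g :: "nat \<Rightarrow> 'a::order"
  assumes "j < p" "p \<le> n" and mono: "strict_mono_on {Suc j<..n} g"
    and below: "\<And>u. u \<in> {Suc j<..p} \<Longrightarrow> g u < g 1"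
    and above: "\<And>u. u \<in> {p<..n} \<Longrightarrow> g 1 < g u"
  shows "strict_mono_on {j<..n} (g \<circ> move_top_to p)"
proof (rule strict_mono_onI)
  fix u v assume uv: "u \<in> {j<..n}" "v \<in> {j<..n}" "u < v"
  consider "v < p" | "v = p" | "p < v" "u < p" | "p < v" "u = p" | "p < u"
    using uv by linarith
  then show "(g \<circ> move_top_to p) u < (g \<circ> move_top_to p) v"
  proof cases
    case 1
    then show ?thesis
      using uv assms(1,2) strict_mono_onD[OF mono, of "Suc u" "Suc v"] by (simp add: move_top_to_def)
  next
    case 2
    then show ?thesis
      using uv below[of "Suc u"] by (simp add: move_top_to_def)
  next
    case 3
    then have "g (Suc u) < g 1" "g 1 < g v"
      using uv below[of "Suc u"] above[of v] by auto
    then show ?thesis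
      using 3 uv by (simp add: move_top_to_def)
  next
    case 4
    then show ?thesis
      using uv above[of v] by (simp add: move_top_to_def)
  next
    case 5
    then show ?thesis
      using uv assms(1,2) strict_mono_onD[OF mono, of u v] by (simp add: move_top_to_def)
  qed
qed

lemma strict_mono_on_comp_move_top_to_gt:
  fixes g :: "nat \<Rightarrow> 'a::order"
  assumes "j < p" "p \<le> n"
  shows "strict_mono_on {j<..n} (g \<circ> move_top_to p) \<longleftrightarrow>
    strict_mono_on {Suc j<..n} g \<and> (\<forall>u\<in>{Suc j<..p}. g u < g 1) \<and> (\<forall>u\<in>{p<..n}. g 1 < g u)"
proof
  assume "strict_mono_on {j<..n} (g \<circ> move_top_to p)"
  then show "strict_mono_on {Suc j<..n} g \<and> (\<forall>u\<in>{Suc j<..p}. g u < g 1) \<and> (\<forall>u\<in>{p<..n}. g 1 < g u)"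
    by (rule strict_mono_on_comp_move_top_toD[OF assms])
qed (use strict_mono_on_comp_move_top_toI[OF assms] in blast)

lemma card_insertion_positions_gt:
  assumes \<xi>: "\<xi> permutes {1..n}" and "j < n"
  shows "card {p \<in> {Suc j..n}. strict_mono_on {j<..n} (\<xi> \<circ> move_top_to p)}
    = of_bool (strict_mono_on {Suc j<..n} \<xi>)"
proof (cases "strict_mono_on {Suc j<..n} \<xi>")
  case False
  then show ?thesis
    using strict_mono_on_comp_move_top_to_gt[of j _ n \<xi>] by auto
next
  case True
  define splits where "splits q \<longleftrightarrow> q \<in> {Suc j..n} \<and>
    (\<forall>u\<in>{Suc j<..q}. \<xi> u < \<xi> 1) \<and> (\<forall>u\<in>{q<..n}. \<xi> 1 < \<xi> u)" for q
  have "\<xi> 1 \<notin> \<xi> ` {Suc j<..n}"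
    using permutes_inj[OF \<xi>] by (auto simp: inj_eq)
  then have "\<exists>!q. splits q"
    unfolding splits_def using \<open>j < n\<close> by (intro ex1_insertion_point[OF True]) auto
  then obtain p where "splits p" "\<And>q. splits q \<Longrightarrow> q = p"
    by blast
  then have "{q. splits q} = {p}"
    by blast
  moreover have "{p \<in> {Suc j..n}. strict_mono_on {j<..n} (\<xi> \<circ> move_top_to p)} = {q. splits q}"
    using strict_mono_on_comp_move_top_to_gt[of j _ n \<xi>] True by (auto simp: splits_def)
  ultimately show ?thesis
    using True by simp
qed

lemma card_insertion_positions:
  assumes \<xi>: "\<xi> permutes {1..n}" and "j \<le> n"
  shows "card {p \<in> {1..n}. strict_mono_on {j<..n} (\<xi> \<circ> move_top_to p)}
    = j * of_bool (strict_mono_on {j<..n} \<xi>) + of_bool (j < n \<and> strict_mono_on {Suc j<..n} \<xi>)"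
proof -
  let ?P = "\<lambda>p. strict_mono_on {j<..n} (\<xi> \<circ> move_top_to p)"
  have "{p \<in> {1..n}. ?P p} = {p \<in> {1..j}. ?P p} \<union> {p \<in> {Suc j..n}. ?P p}"
    using \<open>j \<le> n\<close> by auto
  then have "card {p \<in> {1..n}. ?P p} = card {p \<in> {1..j}. ?P p} + card {p \<in> {Suc j..n}. ?P p}"
    by (simp add: card_Un_disjoint disjoint_iff)
  moreover have "{p \<in> {1..j}. ?P p} = (if strict_mono_on {j<..n} \<xi> then {1..j} else {})"
    using strict_mono_on_comp_move_top_to_le[of _ j n \<xi>] by auto
  moreover have "card {p \<in> {Suc j..n}. ?P p} = of_bool (j < n \<and> strict_mono_on {Suc j<..n} \<xi>)"
    using card_insertion_positions_gt[OF \<xi>] by (cases "j < n") auto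
  ultimately show ?thesis
    by simp
qed

lemma gmult_B1_B:
  assumes n: "1 \<le> n" and "j \<le> n"
  shows "gmult n (B n 1) (B n j) = (\<lambda>x. of_nat j * B n j x + (if j < n then B n (Suc j) x else 0))"
proof
  fix x
  show "gmult n (B n 1) (B n j) x = of_nat j * B n j x + (if j < n then B n (Suc j) x else 0)"
  proof (cases "x \<in> perms n")
    case False
    then show ?thesis
      by (simp add: gmult_eq_0_outside B_eq_0_outside)
  next
    case True
    then have x: "x permutes {1..n}"
      by (simp add: perms_def)
    have "B n j (move_to_top p \<circ> x) = of_bool (strict_mono_on {j<..n} (inv x \<circ> move_top_to p))"
      if "p \<in> {1..n}" for p
    proof -
      note top = move_to_top_permutes[OF that]
      have "inv (move_to_top p \<circ> x) = inv x \<circ> move_top_to p"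
        using o_inv_distrib[OF permutes_bij[OF top] permutes_bij[OF x]] inv_move_to_top[OF that]
        by simp
      then show ?thesis
        using permutes_compose[OF x top] by (simp add: B_altdef perms_def)
    qed
    then have "gmult n (B n 1) (B n j) x = (\<Sum>p=1..n. of_bool (strict_mono_on {j<..n} (inv x \<circ> move_top_to p)))"
      unfolding gmult_B1_left[OF n True] by (intro sum.cong) simp_all
    also have "\<dots> = of_nat (card {p \<in> {1..n}. strict_mono_on {j<..n} (inv x \<circ> move_top_to p)})"
      by (simp add: Int_def)
    also have "\<dots> = of_nat j * B n j x + (if j < n then B n (Suc j) x else 0)"
      using card_insertion_positions[OF permutes_inv[OF x] \<open>j \<le> n\<close>] True by (simp add: B_altdef)
    finally show ?thesis .
  qed
qed

lemma sum_Stirling_Suc: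
  fixes b :: "nat \<Rightarrow> 'a::comm_semiring_1"
  assumes "1 \<le> k"
  shows "(\<Sum>j=1..n. of_nat (Stirling k j) * (of_nat j * b j + (if j < n then b (Suc j) else 0)))
    = (\<Sum>j=1..n. of_nat (Stirling (Suc k) j) * b j)"
proof -
  have "Stirling k 0 = 0"
    using assms by (cases k) auto
  then have shifted: "(\<Sum>j=1..n. of_nat (Stirling k j) * (if j < n then b (Suc j) else 0))
      = (\<Sum>j=1..n. of_nat (Stirling k (j - 1)) * b j)"
    using sum_if_less_Suc_shift[where F = "\<lambda>j. of_nat (Stirling k (j - 1)) * b j"]
    by (simp add: if_distrib[of "\<lambda>y. _ * y"] cong: if_cong)
  have "(\<Sum>j=1..n. of_nat (Stirling k j) * (of_nat j * b j + (if j < n then b (Suc j) else 0)))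
      = (\<Sum>j=1..n. of_nat (j * Stirling k j) * b j)
        + (\<Sum>j=1..n. of_nat (Stirling k j) * (if j < n then b (Suc j) else 0))"
    by (simp add: distrib_left sum.distrib mult_ac)
  also have "\<dots> = (\<Sum>j=1..n. of_nat (j * Stirling k j + Stirling k (j - 1)) * b j)"
    unfolding shifted by (simp add: sum.distrib distrib_right)
  also have "\<dots> = (\<Sum>j=1..n. of_nat (Stirling (Suc k) j) * b j)"
  proof (rule sum.cong)
    fix j assume "j \<in> {1..n}"
    then show "of_nat (j * Stirling k j + Stirling k (j - 1)) * b j = of_nat (Stirling (Suc k) j) * b j"
      by (cases j) auto
  qed simp
  finally show ?thesis .
qed

lemma gpow_B1:
  assumes n: "1 \<le> n" and "1 \<le> k"
  shows "gpow n (B n 1) k = (\<lambda>x. \<Sum>j=1..n. of_nat (Stirling k j) * B n j x)"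
  using \<open>1 \<le> k\<close>
proof (induction k rule: nat_induct_at_least)
  case base
  have "of_nat (Stirling 1 j) * B n j x = (if j = 1 then B n 1 x else 0)" for j x
    by (cases j) auto
  then show ?case
    using n by (auto simp: gmult_gone_right B_eq_0_outside)
next
  case (Suc k)
  have "gpow n (B n 1) (Suc k)
      = (\<lambda>x. \<Sum>j=1..n. of_nat (Stirling k j) * (of_nat j * B n j x + (if j < n then B n (Suc j) x else 0)))"
    using Suc.IH gmult_B1_B[OF n] by (simp add: gmult_sum_right)
  also have "\<dots> = (\<lambda>x. \<Sum>j=1..n. of_nat (Stirling (Suc k) j) * B n j x)"
    by (intro ext sum_Stirling_Suc Suc.hyps)
  finally show ?case .
qed

theorem mainTheorem5:
  fixes n k :: nat
  assumes "1 \<le> n" and "1 \<le> k"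
  shows "gpow n (B n 1) k = (\<lambda>\<sigma>. \<Sum>j=1..min k n. of_nat (Stirling k j) * B n j \<sigma>)"
proof -
  have "(\<Sum>j=1..n. of_nat (Stirling k j) * B n j \<sigma>) = (\<Sum>j=1..min k n. of_nat (Stirling k j) * B n j \<sigma>)"
    for \<sigma>
    by (rule sum.mono_neutral_right) auto
  then show ?thesis
    using gpow_B1[OF assms] by simp
qed

end
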